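(* (A) The Lie algebra $\mathfrak t_{1,n}$ is isomorphic to the Lie algebra with generators $x_i,y_i$ ($i=1,\dots,n$) and relations: $[x_i,y_j]=[x_j,y_i]$ ($i\ne j$); $[x_i,x_j]=[y_i,y_j]=0$ (all $i,j$); $[\sum_j x_j,y_i]=[\sum_j y_j,x_i]=0$ (all $i$); $[x_i,[x_j,y_k]]=[y_i,[y_j,x_k]]=0$ ($i,j,k$ distinct); the isomorphism sends $x_i\mapsto x_i$, $y_i\mapsto y_i$, and $t_{ij}\mapsto[x_i,y_j]$. (B) $\mathfrak t_{1,n}$ is also isomorphic to the Lie algebra with generators $a_i,b_i$ ($i=1,\dots,n$) and relations: $[a_i,a_j]=[b_i,b_j]=0$ (all $i,j$); $[a_1,b_j]=[b_1,a_j]=0$ (all $j$); $[a_j,b_k]=[a_k,b_j]$ (all $j,k$); $[a_i,c_{jk}]=[b_i,c_{jk}]=0$ for $i\le j\le k$, where $c_{jk}:=[b_k,a_k-a_j]$; the isomorphism is given by $a_i=\sum_{j=i}^n x_j$, $b_i=\sum_{j=i}^n y_j$.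
   Context: $\mathfrak t_{1,n}$ is the Lie algebra (over a field of characteristic $0$) with generators $x_i,y_i$ ($1\le i\le n$), $t_{ij}$ ($i\ne j$) and relations $t_{ij}=t_{ji}$, $[t_{ij},t_{ik}+t_{jk}]=0$, $[t_{ij},t_{kl}]=0$, $[x_i,y_j]=t_{ij}$ ($i\ne j$), $[x_i,x_j]=[y_i,y_j]=0$, $[x_i,y_i]=-\sum_{j\ne i}t_{ij}$, $[x_i,t_{jk}]=[y_i,t_{jk}]=0$, $[x_i+x_j,t_{ij}]=[y_i+y_j,t_{ij}]=0$, where $i,j,k,l$ denote distinct indices. *)

theory Defs
  imports Main
begin

datatype ('g, 'k) lterm =
    Gen 'g
  | LZero
  | LAdd "('g, 'k) lterm" "('g, 'k) lterm"
  | LSmul 'k "('g, 'k) lterm"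
  | LBr "('g, 'k) lterm" "('g, 'k) lterm"

fun gens :: "('g, 'k) lterm \<Rightarrow> 'g set" where
  "gens (Gen g) = {g}"
| "gens LZero = {}"
| "gens (LAdd s t) = gens s \<union> gens t"
| "gens (LSmul c s) = gens s"
| "gens (LBr s t) = gens s \<union> gens t"

fun lsubst :: "('g \<Rightarrow> ('h, 'k) lterm) \<Rightarrow> ('g, 'k) lterm \<Rightarrow> ('h, 'k) lterm" where
  "lsubst f (Gen g) = f g"
| "lsubst f LZero = LZero"
| "lsubst f (LAdd s t) = LAdd (lsubst f s) (lsubst f t)"
| "lsubst f (LSmul c s) = LSmul c (lsubst f s)"
| "lsubst f (LBr s t) = LBr (lsubst f s) (lsubst f t)"

fun lsum :: "('g, 'k) lterm list \<Rightarrow> ('g, 'k) lterm" where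
  "lsum [] = LZero"
| "lsum (s # ss) = LAdd s (lsum ss)"

definition lneg :: "('g, 'k::field) lterm \<Rightarrow> ('g, 'k) lterm" where
  "lneg s = LSmul (-1) s"

definition ldiff :: "('g, 'k::field) lterm \<Rightarrow> ('g, 'k) lterm \<Rightarrow> ('g, 'k) lterm" where
  "ldiff s t = LAdd s (lneg t)"

text \<open>Equality in the Lie algebra over 'k presented by the relations R
  (pairs lhs = rhs): the smallest congruence containing R and the axioms of
  a Lie algebra over the field 'k.\<close>
inductive lcong :: "(('g, 'k::field) lterm \<times> ('g, 'k) lterm) set
                    \<Rightarrow> ('g, 'k) lterm \<Rightarrow> ('g, 'k) lterm \<Rightarrow> bool"
  for R where
  rel: "(s, t) \<in> R \<Longrightarrow> lcong R s t"
| refl: "lcong R s s"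
| sym: "lcong R s t \<Longrightarrow> lcong R t s"
| trans: "lcong R s t \<Longrightarrow> lcong R t u \<Longrightarrow> lcong R s u"
| add_cong: "lcong R s s' \<Longrightarrow> lcong R t t' \<Longrightarrow> lcong R (LAdd s t) (LAdd s' t')"
| smul_cong: "lcong R s s' \<Longrightarrow> lcong R (LSmul c s) (LSmul c s')"
| br_cong: "lcong R s s' \<Longrightarrow> lcong R t t' \<Longrightarrow> lcong R (LBr s t) (LBr s' t')"
| add_assoc: "lcong R (LAdd (LAdd s t) u) (LAdd s (LAdd t u))"
| add_comm: "lcong R (LAdd s t) (LAdd t s)"
| add_zero: "lcong R (LAdd s LZero) s"
| add_inv: "lcong R (LAdd s (LSmul (-1) s)) LZero"
| smul_add: "lcong R (LSmul c (LAdd s t)) (LAdd (LSmul c s) (LSmul c t))"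
| add_smul: "lcong R (LSmul (c + d) s) (LAdd (LSmul c s) (LSmul d s))"
| smul_smul: "lcong R (LSmul c (LSmul d s)) (LSmul (c * d) s)"
| smul_one: "lcong R (LSmul 1 s) s"
| br_add_left: "lcong R (LBr (LAdd s t) u) (LAdd (LBr s u) (LBr t u))"
| br_add_right: "lcong R (LBr u (LAdd s t)) (LAdd (LBr u s) (LBr u t))"
| br_smul_left: "lcong R (LBr (LSmul c s) t) (LSmul c (LBr s t))"
| br_smul_right: "lcong R (LBr s (LSmul c t)) (LSmul c (LBr s t))"
| br_alt: "lcong R (LBr s s) LZero"
| jacobi: "lcong R (LAdd (LBr s (LBr t u)) (LAdd (LBr t (LBr u s)) (LBr u (LBr s t)))) LZero"

text \<open>The generator assignment phi : G1 -> (Lie expressions in G2) induces an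
  isomorphism  <G1 | R1>  ->  <G2 | R2>  of presented Lie algebras:
  it is well defined and injective (equivalence), and surjective.\<close>
definition pres_iso ::
  "'g set \<Rightarrow> (('g, 'k::field) lterm \<times> ('g, 'k) lterm) set \<Rightarrow>
   'h set \<Rightarrow> (('h, 'k) lterm \<times> ('h, 'k) lterm) set \<Rightarrow>
   ('g \<Rightarrow> ('h, 'k) lterm) \<Rightarrow> bool" where
  "pres_iso G1 R1 G2 R2 phi \<longleftrightarrow>
     (\<forall>g\<in>G1. gens (phi g) \<subseteq> G2) \<and>
     (\<forall>s t. gens s \<subseteq> G1 \<longrightarrow> gens t \<subseteq> G1 \<longrightarrow>
        (lcong R1 s t \<longleftrightarrow> lcong R2 (lsubst phi s) (lsubst phi t))) \<and>
     (\<forall>u. gens u \<subseteq> G2 \<longrightarrow> (\<exists>s. gens s \<subseteq> G1 \<and> lcong R2 (lsubst phi s) u))"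

datatype tgen = x nat | y nat | t nat nat

definition tgens :: "nat \<Rightarrow> tgen set" where
  "tgens n = {x i | i. i \<in> {1..n}} \<union> {y i | i. i \<in> {1..n}}
           \<union> {t i j | i j. i \<in> {1..n} \<and> j \<in> {1..n} \<and> i \<noteq> j}"

definition trels :: "nat \<Rightarrow> ((tgen, 'k::field) lterm \<times> (tgen, 'k) lterm) set" where
  "trels n =
     {(Gen (t i j), Gen (t j i)) | i j. i \<in> {1..n} \<and> j \<in> {1..n} \<and> i \<noteq> j}
   \<union> {(LBr (Gen (t i j)) (LAdd (Gen (t i k)) (Gen (t j k))), LZero) | i j k.
        i \<in> {1..n} \<and> j \<in> {1..n} \<and> k \<in> {1..n} \<and> i \<noteq> j \<and> i \<noteq> k \<and> j \<noteq> k}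
   \<union> {(LBr (Gen (t i j)) (Gen (t k l)), LZero) | i j k l.
        i \<in> {1..n} \<and> j \<in> {1..n} \<and> k \<in> {1..n} \<and> l \<in> {1..n} \<and>
        i \<noteq> j \<and> i \<noteq> k \<and> i \<noteq> l \<and> j \<noteq> k \<and> j \<noteq> l \<and> k \<noteq> l}
   \<union> {(LBr (Gen (x i)) (Gen (y j)), Gen (t i j)) | i j. i \<in> {1..n} \<and> j \<in> {1..n} \<and> i \<noteq> j}
   \<union> {(LBr (Gen (x i)) (Gen (x j)), LZero) | i j. i \<in> {1..n} \<and> j \<in> {1..n} \<and> i \<noteq> j}
   \<union> {(LBr (Gen (y i)) (Gen (y j)), LZero) | i j. i \<in> {1..n} \<and> j \<in> {1..n} \<and> i \<noteq> j}
   \<union> {(LBr (Gen (x i)) (Gen (y i)),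
        lneg (lsum (map (\<lambda>j. Gen (t i j)) (filter (\<lambda>j. j \<noteq> i) [1..<n+1])))) | i. i \<in> {1..n}}
   \<union> {(LBr (Gen (x i)) (Gen (t j k)), LZero) | i j k.
        i \<in> {1..n} \<and> j \<in> {1..n} \<and> k \<in> {1..n} \<and> i \<noteq> j \<and> i \<noteq> k \<and> j \<noteq> k}
   \<union> {(LBr (Gen (y i)) (Gen (t j k)), LZero) | i j k.
        i \<in> {1..n} \<and> j \<in> {1..n} \<and> k \<in> {1..n} \<and> i \<noteq> j \<and> i \<noteq> k \<and> j \<noteq> k}
   \<union> {(LBr (LAdd (Gen (x i)) (Gen (x j))) (Gen (t i j)), LZero) | i j.
        i \<in> {1..n} \<and> j \<in> {1..n} \<and> i \<noteq> j}
   \<union> {(LBr (LAdd (Gen (y i)) (Gen (y j))) (Gen (t i j)), LZero) | i j.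
        i \<in> {1..n} \<and> j \<in> {1..n} \<and> i \<noteq> j}"

definition xygens :: "nat \<Rightarrow> tgen set" where
  "xygens n = {x i | i. i \<in> {1..n}} \<union> {y i | i. i \<in> {1..n}}"

definition sumx :: "nat \<Rightarrow> (tgen, 'k) lterm" where
  "sumx n = lsum (map (\<lambda>j. Gen (x j)) [1..<n+1])"

definition sumy :: "nat \<Rightarrow> (tgen, 'k) lterm" where
  "sumy n = lsum (map (\<lambda>j. Gen (y j)) [1..<n+1])"

definition Arels :: "nat \<Rightarrow> ((tgen, 'k::field) lterm \<times> (tgen, 'k) lterm) set" where
  "Arels n =
     {(LBr (Gen (x i)) (Gen (y j)), LBr (Gen (x j)) (Gen (y i))) | i j.
        i \<in> {1..n} \<and> j \<in> {1..n} \<and> i \<noteq> j}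
   \<union> {(LBr (Gen (x i)) (Gen (x j)), LZero) | i j. i \<in> {1..n} \<and> j \<in> {1..n}}
   \<union> {(LBr (Gen (y i)) (Gen (y j)), LZero) | i j. i \<in> {1..n} \<and> j \<in> {1..n}}
   \<union> {(LBr (sumx n) (Gen (y i)), LZero) | i. i \<in> {1..n}}
   \<union> {(LBr (sumy n) (Gen (x i)), LZero) | i. i \<in> {1..n}}
   \<union> {(LBr (Gen (x i)) (LBr (Gen (x j)) (Gen (y k))), LZero) | i j k.
        i \<in> {1..n} \<and> j \<in> {1..n} \<and> k \<in> {1..n} \<and> i \<noteq> j \<and> i \<noteq> k \<and> j \<noteq> k}
   \<union> {(LBr (Gen (y i)) (LBr (Gen (y j)) (Gen (x k))), LZero) | i j k.
        i \<in> {1..n} \<and> j \<in> {1..n} \<and> k \<in> {1..n} \<and> i \<noteq> j \<and> i \<noteq> k \<and> j \<noteq> k}"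

fun phiA :: "tgen \<Rightarrow> (tgen, 'k) lterm" where
  "phiA (x i) = Gen (x i)"
| "phiA (y i) = Gen (y i)"
| "phiA (t i j) = LBr (Gen (x i)) (Gen (y j))"

datatype abgen = a nat | b nat

definition abgens :: "nat \<Rightarrow> abgen set" where
  "abgens n = {a i | i. i \<in> {1..n}} \<union> {b i | i. i \<in> {1..n}}"

definition cjk :: "nat \<Rightarrow> nat \<Rightarrow> (abgen, 'k::field) lterm" where
  "cjk j k = LBr (Gen (b k)) (ldiff (Gen (a k)) (Gen (a j)))"

definition Brels :: "nat \<Rightarrow> ((abgen, 'k::field) lterm \<times> (abgen, 'k) lterm) set" where
  "Brels n =
     {(LBr (Gen (a i)) (Gen (a j)), LZero) | i j. i \<in> {1..n} \<and> j \<in> {1..n}}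
   \<union> {(LBr (Gen (b i)) (Gen (b j)), LZero) | i j. i \<in> {1..n} \<and> j \<in> {1..n}}
   \<union> {(LBr (Gen (a 1)) (Gen (b j)), LZero) | j. j \<in> {1..n}}
   \<union> {(LBr (Gen (b 1)) (Gen (a j)), LZero) | j. j \<in> {1..n}}
   \<union> {(LBr (Gen (a j)) (Gen (b k)), LBr (Gen (a k)) (Gen (b j))) | j k.
        j \<in> {1..n} \<and> k \<in> {1..n}}
   \<union> {(LBr (Gen (a i)) (cjk j k), LZero) | i j k.
        i \<in> {1..n} \<and> j \<in> {1..n} \<and> k \<in> {1..n} \<and> i \<le> j \<and> j \<le> k}
   \<union> {(LBr (Gen (b i)) (cjk j k), LZero) | i j k.
        i \<in> {1..n} \<and> j \<in> {1..n} \<and> k \<in> {1..n} \<and> i \<le> j \<and> j \<le> k}"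

fun phiB :: "nat \<Rightarrow> abgen \<Rightarrow> (tgen, 'k) lterm" where
  "phiB n (a i) = lsum (map (\<lambda>j. Gen (x j)) [i..<n+1])"
| "phiB n (b i) = lsum (map (\<lambda>j. Gen (y j)) [i..<n+1])"

end

theory Submission
  imports Defs
begin

(* Each isomorphism comes with an explicit inverse substitution psi; it suffices that phi
   and psi send relations to consequences of relations and are mutually inverse on
   generators.

   (A) The inverse of phiA is the identity on x_i, y_i.  Modulo [x_i, y_j] = [x_j, y_i],
   the relation [x_i, y_i] = - sum_j t_ij is equivalent to [x_1 + ... + x_n, y_i] = 0, and
   the relations involving t_ij follow from the Jacobi identity, because [x_i, y_j]
   commutes with x_k, y_k (k distinct from i, j) and with x_i + x_j, y_i + y_j.

   (B) The substitution a_i = x_i + ... + x_n is triangular, with inverse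
   x_i = a_i - a_(i+1) where a_(n+1) = 0.  Its image of c_jk is - sum [y_q, x_p] over
   j <= p < k <= q, which a_i (i <= j) kills by the cubic relations and
   [x_p + x_q, [x_p, y_q]] = 0.  Conversely, modulo the quadratic relations
   [x_r, [x_p, y_q]] is symmetric in r, p, q, so only r < p < q matters; then it expands
   into terms [a_m, [a_p - a_(p+1), b_s]] with m <= p < s, which vanish since
   [a_m, c_ps] = 0 says that [a_m, [a_p, b_s]] does not depend on p for m <= p <= s. *)

section \<open>Substitution of generators\<close>

lemma lsubst_lsubst: "lsubst f (lsubst g s) = lsubst (\<lambda>v. lsubst f (g v)) s"
  by (induction s) auto

lemma lsubst_Gen [simp]: "lsubst Gen s = s"
  by (induction s) auto

lemma gens_lsubst: "gens (lsubst f s) = (\<Union>g\<in>gens s. gens (f g))"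
  by (induction s) auto

lemma lsubst_lsum [simp]: "lsubst f (lsum ss) = lsum (map (lsubst f) ss)"
  by (induction ss) auto

lemma gens_lsum: "gens (lsum ss) = (\<Union>s\<in>set ss. gens s)"
  by (induction ss) auto

lemma lsubst_ldiff [simp]: "lsubst f (ldiff u v) = ldiff (lsubst f u) (lsubst f v)"
  by (simp add: ldiff_def lneg_def)

lemma gens_ldiff [simp]: "gens (ldiff u v) = gens u \<union> gens v"
  by (simp add: ldiff_def lneg_def)

lemma lcong_lsubst:
  assumes "lcong R s s'"
    and "\<And>u v. (u, v) \<in> R \<Longrightarrow> lcong R' (lsubst f u) (lsubst f v)"
  shows "lcong R' (lsubst f s) (lsubst f s')"
  using assms(1) by induction (auto intro: lcong.intros assms(2))

lemma lcong_lsubst_self: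
  assumes "gens s \<subseteq> G" and "\<And>g. g \<in> G \<Longrightarrow> lcong R (f g) (Gen g)"
  shows "lcong R (lsubst f s) s"
  using assms(1) by (induction s) (auto intro: lcong.intros assms(2))

lemma pres_isoI:
  fixes phi :: "'g \<Rightarrow> ('h, 'k::field) lterm" and psi :: "'h \<Rightarrow> ('g, 'k) lterm"
  assumes gens_phi: "\<And>g. g \<in> G1 \<Longrightarrow> gens (phi g) \<subseteq> G2"
    and gens_psi: "\<And>g. g \<in> G2 \<Longrightarrow> gens (psi g) \<subseteq> G1"
    and rels_phi: "\<And>u v. (u, v) \<in> R1 \<Longrightarrow> lcong R2 (lsubst phi u) (lsubst phi v)"
    and rels_psi: "\<And>u v. (u, v) \<in> R2 \<Longrightarrow> lcong R1 (lsubst psi u) (lsubst psi v)"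
    and psi_phi: "\<And>g. g \<in> G1 \<Longrightarrow> lcong R1 (lsubst psi (phi g)) (Gen g)"
    and phi_psi: "\<And>g. g \<in> G2 \<Longrightarrow> lcong R2 (lsubst phi (psi g)) (Gen g)"
  shows "pres_iso G1 R1 G2 R2 phi"
  unfolding pres_iso_def
proof (intro conjI allI impI ballI)
  fix s s' :: "('g, 'k) lterm"
  assume s: "gens s \<subseteq> G1" and s': "gens s' \<subseteq> G1"
  have psi_phi_s: "lcong R1 (lsubst psi (lsubst phi s)) s"
    unfolding lsubst_lsubst using s psi_phi by (rule lcong_lsubst_self)
  have psi_phi_s': "lcong R1 (lsubst psi (lsubst phi s')) s'"
    unfolding lsubst_lsubst using s' psi_phi by (rule lcong_lsubst_self)
  show "lcong R1 s s' = lcong R2 (lsubst phi s) (lsubst phi s')"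
  proof
    assume "lcong R1 s s'"
    then show "lcong R2 (lsubst phi s) (lsubst phi s')" using rels_phi by (rule lcong_lsubst)
  next
    assume "lcong R2 (lsubst phi s) (lsubst phi s')"
    then have "lcong R1 (lsubst psi (lsubst phi s)) (lsubst psi (lsubst phi s'))"
      using rels_psi by (rule lcong_lsubst)
    then show "lcong R1 s s'"
      using psi_phi_s psi_phi_s' by (meson lcong.sym lcong.trans)
  qed
next
  fix u :: "('h, 'k) lterm"
  assume u: "gens u \<subseteq> G2"
  show "\<exists>s. gens s \<subseteq> G1 \<and> lcong R2 (lsubst phi s) u"
  proof (intro exI conjI)
    show "gens (lsubst psi u) \<subseteq> G1" using u gens_psi by (auto simp: gens_lsubst)
    show "lcong R2 (lsubst phi (lsubst psi u)) u"
      unfolding lsubst_lsubst using u phi_psi by (rule lcong_lsubst_self)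
  qed
qed (rule gens_phi)

section \<open>Identities modulo the Lie algebra axioms\<close>

lemmas [trans] = lcong.trans
declare lcong.refl [simp, intro]

lemma lcong_add_cong1: "lcong R s s' \<Longrightarrow> lcong R (LAdd s u) (LAdd s' u)"
  by (rule lcong.add_cong) auto

lemma lcong_add_cong2: "lcong R u u' \<Longrightarrow> lcong R (LAdd s u) (LAdd s u')"
  by (rule lcong.add_cong) auto

lemma lcong_br_cong1: "lcong R s s' \<Longrightarrow> lcong R (LBr s u) (LBr s' u)"
  by (rule lcong.br_cong) auto

lemma lcong_br_cong2: "lcong R u u' \<Longrightarrow> lcong R (LBr s u) (LBr s u')"
  by (rule lcong.br_cong) auto

lemma lcong_zero_add: "lcong R (LAdd LZero s) s"
  by (meson lcong.add_comm lcong.add_zero lcong.trans)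

lemma lcong_add_zeroI: "lcong R s LZero \<Longrightarrow> lcong R u LZero \<Longrightarrow> lcong R (LAdd s u) LZero"
  by (meson lcong_add_cong1 lcong_zero_add lcong.trans)

lemma lcong_add_left_commute: "lcong R (LAdd p (LAdd q r)) (LAdd q (LAdd p r))"
proof -
  have "lcong R (LAdd p (LAdd q r)) (LAdd (LAdd p q) r)" by (rule lcong.sym, rule lcong.add_assoc)
  also have "lcong R \<dots> (LAdd (LAdd q p) r)" by (rule lcong_add_cong1, rule lcong.add_comm)
  also have "lcong R \<dots> (LAdd q (LAdd p r))" by (rule lcong.add_assoc)
  finally show ?thesis .
qed

lemma lcong_add_add_swap: "lcong R (LAdd (LAdd p q) (LAdd r w)) (LAdd (LAdd p r) (LAdd q w))"
proof -
  have "lcong R (LAdd (LAdd p q) (LAdd r w)) (LAdd p (LAdd q (LAdd r w)))" by (rule lcong.add_assoc)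
  also have "lcong R \<dots> (LAdd p (LAdd r (LAdd q w)))" by (rule lcong_add_cong2, rule lcong_add_left_commute)
  also have "lcong R \<dots> (LAdd (LAdd p r) (LAdd q w))" by (rule lcong.sym, rule lcong.add_assoc)
  finally show ?thesis .
qed

lemma lcong_neg_add_self: "lcong R (LAdd (LSmul (-1) s) s) LZero"
  by (meson lcong.add_comm lcong.add_inv lcong.trans)

lemma lcong_zero_if_add_left: "lcong R (LAdd u v) u \<Longrightarrow> lcong R v LZero"
proof -
  assume uv: "lcong R (LAdd u v) u"
  have "lcong R v (LAdd v LZero)" by (rule lcong.sym, rule lcong.add_zero)
  also have "lcong R \<dots> (LAdd v (LAdd u (LSmul (-1) u)))"
    by (rule lcong_add_cong2, rule lcong.sym, rule lcong.add_inv)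
  also have "lcong R \<dots> (LAdd (LAdd v u) (LSmul (-1) u))" by (rule lcong.sym, rule lcong.add_assoc)
  also have "lcong R \<dots> (LAdd (LAdd u v) (LSmul (-1) u))" by (rule lcong_add_cong1, rule lcong.add_comm)
  also have "lcong R \<dots> (LAdd u (LSmul (-1) u))" by (rule lcong_add_cong1, rule uv)
  also have "lcong R \<dots> LZero" by (rule lcong.add_inv)
  finally show ?thesis .
qed

lemma lcong_smul_LZero: "lcong R (LSmul c LZero) LZero"
proof (rule lcong_zero_if_add_left)
  have "lcong R (LAdd (LSmul c LZero) (LSmul c LZero)) (LSmul c (LAdd LZero LZero))"
    by (rule lcong.sym, rule lcong.smul_add)
  also have "lcong R \<dots> (LSmul c LZero)" by (rule lcong.smul_cong, rule lcong.add_zero)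
  finally show "lcong R (LAdd (LSmul c LZero) (LSmul c LZero)) (LSmul c LZero)" .
qed

lemma lcong_smul_zero: "lcong R s LZero \<Longrightarrow> lcong R (LSmul c s) LZero"
  by (meson lcong_smul_LZero lcong.smul_cong lcong.trans)

lemma lcong_br_LZero1: "lcong R (LBr LZero s) LZero"
proof (rule lcong_zero_if_add_left)
  have "lcong R (LAdd (LBr LZero s) (LBr LZero s)) (LBr (LAdd LZero LZero) s)"
    by (rule lcong.sym, rule lcong.br_add_left)
  also have "lcong R \<dots> (LBr LZero s)" by (rule lcong_br_cong1, rule lcong.add_zero)
  finally show "lcong R (LAdd (LBr LZero s) (LBr LZero s)) (LBr LZero s)" .
qed

lemma lcong_br_LZero2: "lcong R (LBr s LZero) LZero"
proof (rule lcong_zero_if_add_left)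
  have "lcong R (LAdd (LBr s LZero) (LBr s LZero)) (LBr s (LAdd LZero LZero))"
    by (rule lcong.sym, rule lcong.br_add_right)
  also have "lcong R \<dots> (LBr s LZero)" by (rule lcong_br_cong2, rule lcong.add_zero)
  finally show "lcong R (LAdd (LBr s LZero) (LBr s LZero)) (LBr s LZero)" .
qed

lemma lcong_br_zero1: "lcong R s LZero \<Longrightarrow> lcong R (LBr s u) LZero"
  by (meson lcong_br_cong1 lcong_br_LZero1 lcong.trans)

lemma lcong_br_zero2: "lcong R u LZero \<Longrightarrow> lcong R (LBr s u) LZero"
  by (meson lcong_br_cong2 lcong_br_LZero2 lcong.trans)

lemma lcong_br_zero_cong1: "lcong R s s' \<Longrightarrow> lcong R (LBr s' u) LZero \<Longrightarrow> lcong R (LBr s u) LZero"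
  by (meson lcong_br_cong1 lcong.trans)

lemma lcong_br_zero_cong2: "lcong R s s' \<Longrightarrow> lcong R (LBr u s') LZero \<Longrightarrow> lcong R (LBr u s) LZero"
  by (meson lcong_br_cong2 lcong.trans)

lemma lcong_neg_neg: "lcong R (LSmul (-1) (LSmul (-1) s)) s"
proof -
  have "lcong R (LSmul (-1) (LSmul (-1) s)) (LSmul ((-1) * (-1)) s)" by (rule lcong.smul_smul)
  then show ?thesis using lcong.smul_one[of R s] by (simp add: lcong.trans)
qed

lemma lcong_eq_if_diff_zero: "lcong R (LAdd s (LSmul (-1) u)) LZero \<Longrightarrow> lcong R s u"
proof -
  assume diff: "lcong R (LAdd s (LSmul (-1) u)) LZero"
  have "lcong R s (LAdd s LZero)" by (rule lcong.sym, rule lcong.add_zero)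
  also have "lcong R \<dots> (LAdd s (LAdd (LSmul (-1) u) u))"
    by (rule lcong_add_cong2, rule lcong.sym, rule lcong_neg_add_self)
  also have "lcong R \<dots> (LAdd (LAdd s (LSmul (-1) u)) u)" by (rule lcong.sym, rule lcong.add_assoc)
  also have "lcong R \<dots> (LAdd LZero u)" by (rule lcong_add_cong1, rule diff)
  also have "lcong R \<dots> u" by (rule lcong_zero_add)
  finally show ?thesis .
qed

lemma lcong_eq_neg_if_add_zero: "lcong R (LAdd s u) LZero \<Longrightarrow> lcong R s (LSmul (-1) u)"
  by (meson lcong_add_cong2 lcong_eq_if_diff_zero lcong_neg_neg lcong.trans)

lemma lcong_br_anticomm: "lcong R (LBr s u) (LSmul (-1) (LBr u s))"
proof (rule lcong_eq_neg_if_add_zero)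
  have "lcong R (LAdd (LBr s u) (LBr u s))
      (LAdd (LAdd (LBr s s) (LBr s u)) (LAdd (LBr u s) (LBr u u)))"
    by (rule lcong.sym, rule lcong.add_cong,
        meson lcong_add_cong1 lcong_zero_add lcong.br_alt lcong.trans,
        meson lcong_add_cong2 lcong.add_zero lcong.br_alt lcong.trans)
  also have "lcong R \<dots> (LAdd (LBr s (LAdd s u)) (LBr u (LAdd s u)))"
    by (rule lcong.add_cong; rule lcong.sym, rule lcong.br_add_right)
  also have "lcong R \<dots> (LBr (LAdd s u) (LAdd s u))"
    by (rule lcong.sym, rule lcong.br_add_left)
  also have "lcong R \<dots> LZero" by (rule lcong.br_alt)
  finally show "lcong R (LAdd (LBr s u) (LBr u s)) LZero" .
qed

lemma lcong_br_swap: "lcong R (LBr u s) (LBr u' s') \<Longrightarrow> lcong R (LBr s u) (LBr s' u')"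
  by (meson lcong_br_anticomm lcong.smul_cong lcong.sym lcong.trans)

lemma lcong_br_zero_swap: "lcong R (LBr u s) LZero \<Longrightarrow> lcong R (LBr s u) LZero"
  by (meson lcong_br_anticomm lcong_smul_zero lcong.trans)

lemma lcong_br_zero_swap_inner: "lcong R (LBr s (LBr v u)) LZero \<Longrightarrow> lcong R (LBr s (LBr u v)) LZero"
  by (meson lcong_br_anticomm lcong_br_zero_cong2 lcong.br_smul_right lcong_smul_zero lcong.trans)

lemma lcong_br_leibniz: "lcong R (LBr s (LBr u v)) (LAdd (LBr (LBr s u) v) (LBr u (LBr s v)))"
proof -
  have "lcong R (LBr s (LBr u v)) (LSmul (-1) (LAdd (LBr u (LBr v s)) (LBr v (LBr s u))))"
    by (rule lcong_eq_neg_if_add_zero, rule lcong.jacobi)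
  also have "lcong R \<dots> (LAdd (LSmul (-1) (LBr u (LBr v s))) (LSmul (-1) (LBr v (LBr s u))))"
    by (rule lcong.smul_add)
  also have "lcong R \<dots> (LAdd (LBr u (LBr s v)) (LBr (LBr s u) v))"
  proof (rule lcong.add_cong)
    have "lcong R (LBr u (LBr s v)) (LBr u (LSmul (-1) (LBr v s)))"
      by (rule lcong_br_cong2, rule lcong_br_anticomm)
    also have "lcong R \<dots> (LSmul (-1) (LBr u (LBr v s)))" by (rule lcong.br_smul_right)
    finally show "lcong R (LSmul (-1) (LBr u (LBr v s))) (LBr u (LBr s v))" by (rule lcong.sym)
    show "lcong R (LSmul (-1) (LBr v (LBr s u))) (LBr (LBr s u) v)"
      by (rule lcong.sym, rule lcong_br_anticomm)
  qed
  also have "lcong R \<dots> (LAdd (LBr (LBr s u) v) (LBr u (LBr s v)))" by (rule lcong.add_comm)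
  finally show ?thesis .
qed

lemma lcong_br_left_commute:
  "lcong R (LBr s u) LZero \<Longrightarrow> lcong R (LBr s (LBr u v)) (LBr u (LBr s v))"
  by (meson lcong_add_cong1 lcong_br_zero1 lcong_br_leibniz lcong_zero_add lcong.trans)

lemma lcong_br_br_zero:
  "lcong R (LBr s u) LZero \<Longrightarrow> lcong R (LBr s v) LZero \<Longrightarrow> lcong R (LBr s (LBr u v)) LZero"
  by (meson lcong_br_zero2 lcong_br_left_commute lcong.trans)

lemma lcong_br_ldiff1: "lcong R (LBr (ldiff u v) w) (ldiff (LBr u w) (LBr v w))"
  unfolding ldiff_def lneg_def
  by (meson lcong_add_cong2 lcong.br_add_left lcong.br_smul_left lcong.trans)

lemma lcong_br_ldiff2: "lcong R (LBr w (ldiff u v)) (ldiff (LBr w u) (LBr w v))"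
  unfolding ldiff_def lneg_def
  by (meson lcong_add_cong2 lcong.br_add_right lcong.br_smul_right lcong.trans)

lemma lcong_ldiff_zeroI: "lcong R u LZero \<Longrightarrow> lcong R v LZero \<Longrightarrow> lcong R (ldiff u v) LZero"
  unfolding ldiff_def lneg_def by (simp add: lcong_add_zeroI lcong_smul_zero)

lemma lcong_ldiff_cong: "lcong R u u' \<Longrightarrow> lcong R v v' \<Longrightarrow> lcong R (ldiff u v) (ldiff u' v')"
  unfolding ldiff_def lneg_def by (simp add: lcong.add_cong lcong.smul_cong)

lemma lcong_ldiff_self: "lcong R (ldiff u u) LZero"
  unfolding ldiff_def lneg_def by (rule lcong.add_inv)

lemma lcong_eq_if_ldiff_zero: "lcong R (ldiff u v) LZero \<Longrightarrow> lcong R u v"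
  unfolding ldiff_def lneg_def by (rule lcong_eq_if_diff_zero)

lemma lcong_br_ldiff_zero1:
  "lcong R (LBr u w) LZero \<Longrightarrow> lcong R (LBr v w) LZero \<Longrightarrow> lcong R (LBr (ldiff u v) w) LZero"
  by (meson lcong_br_ldiff1 lcong_ldiff_zeroI lcong.trans)

lemma lcong_br_ldiff_zero2:
  "lcong R (LBr w u) LZero \<Longrightarrow> lcong R (LBr w v) LZero \<Longrightarrow> lcong R (LBr w (ldiff u v)) LZero"
  by (meson lcong_br_ldiff2 lcong_ldiff_zeroI lcong.trans)

lemma lcong_br_ldiff_ldiff:
  "lcong R (LBr (ldiff u v) (ldiff w z)) (ldiff (ldiff (LBr u w) (LBr u z)) (ldiff (LBr v w) (LBr v z)))"
  by (rule lcong.trans[OF lcong_br_ldiff1], rule lcong_ldiff_cong; rule lcong_br_ldiff2)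

lemma lcong_br_br_ldiff:
  "lcong R (LBr w (LBr z (ldiff u v))) (ldiff (LBr w (LBr z u)) (LBr w (LBr z v)))"
  by (rule lcong.trans[OF lcong_br_cong2[OF lcong_br_ldiff2]], rule lcong_br_ldiff2)

lemma lcong_ldiff_ldiff_swap: "lcong R (ldiff (ldiff p q) (ldiff r w)) (ldiff (ldiff p r) (ldiff q w))"
proof -
  have neg_diff: "lcong R (LSmul (-1) (LAdd u (LSmul (-1) v))) (LAdd (LSmul (-1) u) v)" for u v
    by (meson lcong_add_cong2 lcong.smul_add lcong_neg_neg lcong.trans)
  have "lcong R (ldiff (ldiff p q) (ldiff r w))
      (LAdd (LAdd p (LSmul (-1) q)) (LAdd (LSmul (-1) r) w))"
    unfolding ldiff_def lneg_def by (rule lcong_add_cong2, rule neg_diff)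
  also have "lcong R \<dots> (LAdd (LAdd p (LSmul (-1) r)) (LAdd (LSmul (-1) q) w))"
    by (rule lcong_add_add_swap)
  also have "lcong R \<dots> (ldiff (ldiff p r) (ldiff q w))"
    unfolding ldiff_def lneg_def by (rule lcong_add_cong2, rule lcong.sym, rule neg_diff)
  finally show ?thesis .
qed

lemma lcong_ldiff_add_cancel: "lcong R (LAdd (ldiff u v) v) u"
proof -
  have "lcong R (LAdd (ldiff u v) v) (LAdd u (LAdd (LSmul (-1) v) v))"
    unfolding ldiff_def lneg_def by (rule lcong.add_assoc)
  also have "lcong R \<dots> (LAdd u LZero)" by (rule lcong_add_cong2, rule lcong_neg_add_self)
  also have "lcong R \<dots> u" by (rule lcong.add_zero)
  finally show ?thesis .
qed

lemma lcong_add_ldiff_cancel: "lcong R (ldiff (LAdd u v) v) u"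
proof -
  have "lcong R (ldiff (LAdd u v) v) (LAdd u (LAdd v (LSmul (-1) v)))"
    unfolding ldiff_def lneg_def by (rule lcong.add_assoc)
  also have "lcong R \<dots> (LAdd u LZero)" by (rule lcong_add_cong2, rule lcong.add_inv)
  also have "lcong R \<dots> u" by (rule lcong.add_zero)
  finally show ?thesis .
qed

lemma lcong_ldiff_add_self: "lcong R (ldiff u (LAdd v u)) (LSmul (-1) v)"
proof -
  have "lcong R (ldiff u (LAdd v u)) (LAdd u (LAdd (LSmul (-1) v) (LSmul (-1) u)))"
    unfolding ldiff_def lneg_def by (rule lcong_add_cong2, rule lcong.smul_add)
  also have "lcong R \<dots> (LAdd (LSmul (-1) v) (LAdd u (LSmul (-1) u)))"
    by (rule lcong_add_left_commute)
  also have "lcong R \<dots> (LAdd (LSmul (-1) v) LZero)" by (rule lcong_add_cong2, rule lcong.add_inv)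
  also have "lcong R \<dots> (LSmul (-1) v)" by (rule lcong.add_zero)
  finally show ?thesis .
qed

lemma lcong_lsum_cong:
  "(\<And>j. j \<in> set L \<Longrightarrow> lcong R (f j) (g j)) \<Longrightarrow> lcong R (lsum (map f L)) (lsum (map g L))"
  by (induction L) (simp_all add: lcong.add_cong)

lemma lcong_lsum_zero:
  "(\<And>j. j \<in> set L \<Longrightarrow> lcong R (f j) LZero) \<Longrightarrow> lcong R (lsum (map f L)) LZero"
  by (induction L) (simp_all add: lcong_add_zeroI)

lemma lcong_br_lsum2: "lcong R (LBr s (lsum (map f L))) (lsum (map (\<lambda>j. LBr s (f j)) L))"
proof (induction L)
  case (Cons p L)
  have "lcong R (LBr s (LAdd (f p) (lsum (map f L))))
      (LAdd (LBr s (f p)) (LBr s (lsum (map f L))))"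
    by (rule lcong.br_add_right)
  also have "lcong R \<dots> (LAdd (LBr s (f p)) (lsum (map (\<lambda>j. LBr s (f j)) L)))"
    by (rule lcong_add_cong2, rule Cons)
  finally show ?case by simp
qed (simp add: lcong_br_LZero2)

lemma lcong_br_lsum1: "lcong R (LBr (lsum (map f L)) s) (lsum (map (\<lambda>j. LBr (f j) s) L))"
proof (induction L)
  case (Cons p L)
  have "lcong R (LBr (LAdd (f p) (lsum (map f L))) s)
      (LAdd (LBr (f p) s) (LBr (lsum (map f L)) s))"
    by (rule lcong.br_add_left)
  also have "lcong R \<dots> (LAdd (LBr (f p) s) (lsum (map (\<lambda>j. LBr (f j) s) L)))"
    by (rule lcong_add_cong2, rule Cons)
  finally show ?case by simp
qed (simp add: lcong_br_LZero1)

lemma lcong_br_lsum_zero2: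
  "(\<And>j. j \<in> set L \<Longrightarrow> lcong R (LBr s (f j)) LZero) \<Longrightarrow> lcong R (LBr s (lsum (map f L))) LZero"
  by (rule lcong.trans[OF lcong_br_lsum2], rule lcong_lsum_zero)

lemma lcong_br_lsum_zero1:
  "(\<And>j. j \<in> set L \<Longrightarrow> lcong R (LBr (f j) s) LZero) \<Longrightarrow> lcong R (LBr (lsum (map f L)) s) LZero"
  by (rule lcong.trans[OF lcong_br_lsum1], rule lcong_lsum_zero)

lemma lcong_lsum_append: "lcong R (lsum (xs @ ys)) (LAdd (lsum xs) (lsum ys))"
proof (induction xs)
  case Nil
  show ?case by (simp add: lcong.sym lcong_zero_add)
next
  case (Cons p xs)
  have "lcong R (LAdd p (lsum (xs @ ys))) (LAdd p (LAdd (lsum xs) (lsum ys)))"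
    by (rule lcong_add_cong2, rule Cons)
  also have "lcong R \<dots> (LAdd (LAdd p (lsum xs)) (lsum ys))"
    by (rule lcong.sym, rule lcong.add_assoc)
  finally show ?case by simp
qed

lemma lcong_lsum_remove1:
  "j \<in> set L \<Longrightarrow> lcong R (lsum (map f L)) (LAdd (f j) (lsum (map f (remove1 j L))))"
proof (induction L)
  case (Cons p L)
  show ?case
  proof (cases "p = j")
    case False
    then have "j \<in> set L" using Cons.prems by simp
    then have "lcong R (LAdd (f p) (lsum (map f L)))
        (LAdd (f p) (LAdd (f j) (lsum (map f (remove1 j L)))))"
      by (rule lcong_add_cong2[OF Cons.IH])
    also have "lcong R \<dots> (LAdd (f j) (LAdd (f p) (lsum (map f (remove1 j L)))))"
      by (rule lcong_add_left_commute)
    finally show ?thesis using False by simp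
  qed simp
qed simp

lemma lcong_lsum_add:
  "lcong R (lsum (map (\<lambda>j. LAdd (f j) (g j)) L)) (LAdd (lsum (map f L)) (lsum (map g L)))"
proof (induction L)
  case Nil
  show ?case by (simp add: lcong.sym lcong.add_zero)
next
  case (Cons p L)
  have "lcong R (LAdd (LAdd (f p) (g p)) (lsum (map (\<lambda>j. LAdd (f j) (g j)) L)))
      (LAdd (LAdd (f p) (g p)) (LAdd (lsum (map f L)) (lsum (map g L))))"
    by (rule lcong_add_cong2, rule Cons)
  also have "lcong R \<dots> (LAdd (LAdd (f p) (lsum (map f L))) (LAdd (g p) (lsum (map g L))))"
    by (rule lcong_add_add_swap)
  finally show ?case by simp
qed

lemma lcong_lsum_commute:
  "lcong R (lsum (map (\<lambda>p. lsum (map (h p) L2)) L1))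
           (lsum (map (\<lambda>q. lsum (map (\<lambda>p. h p q) L1)) L2))"
proof (induction L1)
  case Nil
  show ?case by (simp add: lcong.sym lcong_lsum_zero)
next
  case (Cons p L1)
  have "lcong R (LAdd (lsum (map (h p) L2)) (lsum (map (\<lambda>p. lsum (map (h p) L2)) L1)))
      (LAdd (lsum (map (h p) L2)) (lsum (map (\<lambda>q. lsum (map (\<lambda>p. h p q) L1)) L2)))"
    by (rule lcong_add_cong2, rule Cons)
  also have "lcong R \<dots> (lsum (map (\<lambda>q. LAdd (h p q) (lsum (map (\<lambda>p. h p q) L1))) L2))"
    by (rule lcong.sym, rule lcong_lsum_add)
  finally show ?case by simp
qed

lemma lcong_lsum_two:
  assumes "distinct L" "p \<in> set L" "q \<in> set L" "p \<noteq> q"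
    and "\<And>r. r \<in> set L \<Longrightarrow> r \<noteq> p \<Longrightarrow> r \<noteq> q \<Longrightarrow> lcong R (f r) LZero"
  shows "lcong R (lsum (map f L)) (LAdd (f p) (f q))"
proof -
  have q: "q \<in> set (remove1 p L)" using assms by (simp add: set_remove1_eq)
  have "lcong R (lsum (map f L)) (LAdd (f p) (lsum (map f (remove1 p L))))"
    using assms(2) by (rule lcong_lsum_remove1)
  also have "lcong R \<dots> (LAdd (f p) (LAdd (f q) (lsum (map f (remove1 q (remove1 p L))))))"
    using q by (rule lcong_add_cong2[OF lcong_lsum_remove1])
  also have "lcong R \<dots> (LAdd (f p) (LAdd (f q) LZero))"
  proof (rule lcong_add_cong2, rule lcong_add_cong2, rule lcong_lsum_zero)
    fix r assume "r \<in> set (remove1 q (remove1 p L))"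
    then show "lcong R (f r) LZero"
      using assms by (auto simp: set_remove1_eq distinct_remove1)
  qed
  also have "lcong R \<dots> (LAdd (f p) (f q))" by (rule lcong_add_cong2, rule lcong.add_zero)
  finally show ?thesis .
qed

lemma lcong_lsum_telescope:
  assumes "g (Suc n) = LZero" "i \<le> Suc n"
  shows "lcong R (lsum (map (\<lambda>j. ldiff (g j) (g (Suc j))) [i..<Suc n])) (g i)"
  using assms(2)
proof (induction rule: inc_induct)
  case base
  then show ?case using assms(1) by simp
next
  case (step m)
  have "lsum (map (\<lambda>j. ldiff (g j) (g (Suc j))) [m..<Suc n])
      = LAdd (ldiff (g m) (g (Suc m))) (lsum (map (\<lambda>j. ldiff (g j) (g (Suc j))) [Suc m..<Suc n]))"
    using step.hyps by (simp add: upt_conv_Cons del: upt_Suc)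
  also have "lcong R \<dots> (LAdd (ldiff (g m) (g (Suc m))) (g (Suc m)))"
    by (rule lcong_add_cong2, rule step.IH)
  also have "lcong R \<dots> (g m)" by (rule lcong_ldiff_add_cancel)
  finally show ?case .
qed

lemma lcong_br_lsum_two1:
  assumes "distinct L" "p \<in> set L" "q \<in> set L" "p \<noteq> q"
    and "\<And>r. r \<in> set L \<Longrightarrow> r \<noteq> p \<Longrightarrow> r \<noteq> q \<Longrightarrow> lcong R (LBr (f r) s) LZero"
  shows "lcong R (LBr (lsum (map f L)) s) (LBr (LAdd (f p) (f q)) s)"
proof -
  have "lcong R (LBr (lsum (map f L)) s) (lsum (map (\<lambda>r. LBr (f r) s) L))"
    by (rule lcong_br_lsum1)
  also have "lcong R \<dots> (LAdd (LBr (f p) s) (LBr (f q) s))"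
    using assms by (rule lcong_lsum_two)
  also have "lcong R \<dots> (LBr (LAdd (f p) (f q)) s)"
    by (rule lcong.sym, rule lcong.br_add_left)
  finally show ?thesis .
qed

lemma lcong_zero_on_distinct_triples:
  fixes U :: "nat \<Rightarrow> nat \<Rightarrow> nat \<Rightarrow> ('g, 'k::field) lterm"
  assumes swap12: "\<And>r p q. r \<in> S \<Longrightarrow> p \<in> S \<Longrightarrow> q \<in> S \<Longrightarrow> lcong R (U r p q) (U p r q)"
    and swap23: "\<And>r p q. r \<in> S \<Longrightarrow> p \<in> S \<Longrightarrow> q \<in> S \<Longrightarrow> lcong R (U r p q) (U r q p)"
    and ordered: "\<And>r p q. r \<in> S \<Longrightarrow> p \<in> S \<Longrightarrow> q \<in> S \<Longrightarrow> r < p \<Longrightarrow> p < q \<Longrightarrow>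
                   lcong R (U r p q) LZero"
    and ijk: "i \<in> S" "j \<in> S" "k \<in> S" "i \<noteq> j" "i \<noteq> k" "j \<noteq> k"
  shows "lcong R (U i j k) LZero"
proof -
  have first_less: "lcong R (U r p q) LZero"
    if rpq: "r \<in> S" "p \<in> S" "q \<in> S" "r < p" "q \<noteq> r" "q \<noteq> p" for r p q
  proof -
    consider "p < q" | "r < q" "q < p" | "q < r" using rpq by linarith
    then show ?thesis
    proof cases
      case 1
      then show ?thesis using rpq by (intro ordered)
    next
      case 2
      have "lcong R (U r p q) (U r q p)" using rpq by (intro swap23)
      also have "lcong R \<dots> LZero" using rpq 2 by (intro ordered)
      finally show ?thesis .
    next
      case 3
      have "lcong R (U r p q) (U r q p)" using rpq by (intro swap23)
      also have "lcong R \<dots> (U q r p)" using rpq by (intro swap12)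
      also have "lcong R \<dots> LZero" using rpq 3 by (intro ordered)
      finally show ?thesis .
    qed
  qed
  show ?thesis
  proof (cases "i < j")
    case True
    then show ?thesis using ijk by (intro first_less) auto
  next
    case False
    then have "j < i" using ijk by simp
    have "lcong R (U i j k) (U j i k)" using ijk by (intro swap12)
    also have "lcong R \<dots> LZero" using ijk \<open>j < i\<close> by (intro first_less) auto
    finally show ?thesis .
  qed
qed
section \<open>Presentation (A)\<close>

declare upt_Suc [simp del]

lemma remove1_eq_filter: "distinct L \<Longrightarrow> remove1 i L = filter (\<lambda>j. j \<noteq> i) L"
  by (induction L) (auto intro: filter_True[symmetric])

lemma Arels_x_x: "i \<in> {1..n} \<Longrightarrow> j \<in> {1..n} \<Longrightarrow>
    lcong (Arels n) (LBr (Gen (x i)) (Gen (x j))) LZero"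
  by (rule lcong.rel) (simp add: Arels_def)

lemma Arels_y_y: "i \<in> {1..n} \<Longrightarrow> j \<in> {1..n} \<Longrightarrow>
    lcong (Arels n) (LBr (Gen (y i)) (Gen (y j))) LZero"
  by (rule lcong.rel) (simp add: Arels_def)

lemma Arels_x_y_symm: "i \<in> {1..n} \<Longrightarrow> j \<in> {1..n} \<Longrightarrow>
    lcong (Arels n) (LBr (Gen (x i)) (Gen (y j))) (LBr (Gen (x j)) (Gen (y i)))"
  by (cases "i = j") (simp, rule lcong.rel, simp add: Arels_def)

lemma Arels_sumx_y: "i \<in> {1..n} \<Longrightarrow> lcong (Arels n) (LBr (sumx n) (Gen (y i))) LZero"
  by (rule lcong.rel) (simp add: Arels_def)

lemma Arels_sumy_x: "i \<in> {1..n} \<Longrightarrow> lcong (Arels n) (LBr (sumy n) (Gen (x i))) LZero"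
  by (rule lcong.rel) (simp add: Arels_def)

lemma Arels_x_x_y:
  "i \<in> {1..n} \<Longrightarrow> j \<in> {1..n} \<Longrightarrow> k \<in> {1..n} \<Longrightarrow> i \<noteq> j \<Longrightarrow> i \<noteq> k \<Longrightarrow> j \<noteq> k \<Longrightarrow>
    lcong (Arels n) (LBr (Gen (x i)) (LBr (Gen (x j)) (Gen (y k)))) LZero"
  by (rule lcong.rel) (simp add: Arels_def)

lemma Arels_y_y_x:
  "i \<in> {1..n} \<Longrightarrow> j \<in> {1..n} \<Longrightarrow> k \<in> {1..n} \<Longrightarrow> i \<noteq> j \<Longrightarrow> i \<noteq> k \<Longrightarrow> j \<noteq> k \<Longrightarrow>
    lcong (Arels n) (LBr (Gen (y i)) (LBr (Gen (y j)) (Gen (x k)))) LZero"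
  by (rule lcong.rel) (simp add: Arels_def)

lemma Arels_y_x_y:
  "i \<in> {1..n} \<Longrightarrow> j \<in> {1..n} \<Longrightarrow> k \<in> {1..n} \<Longrightarrow> i \<noteq> j \<Longrightarrow> i \<noteq> k \<Longrightarrow> j \<noteq> k \<Longrightarrow>
    lcong (Arels n) (LBr (Gen (y i)) (LBr (Gen (x j)) (Gen (y k)))) LZero"
  by (rule lcong_br_zero_swap_inner, rule Arels_y_y_x) auto


lemma Arels_sumx_x_y: "i \<in> {1..n} \<Longrightarrow> j \<in> {1..n} \<Longrightarrow>
    lcong (Arels n) (LBr (sumx n) (LBr (Gen (x i)) (Gen (y j)))) LZero"
proof (rule lcong_br_br_zero)
  show "lcong (Arels n) (LBr (sumx n) (Gen (x i))) LZero" if "i \<in> {1..n}"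
    unfolding sumx_def using that by (intro lcong_br_lsum_zero1 Arels_x_x) auto
qed (rule Arels_sumx_y)

lemma Arels_sumy_x_y: "i \<in> {1..n} \<Longrightarrow> j \<in> {1..n} \<Longrightarrow>
    lcong (Arels n) (LBr (sumy n) (LBr (Gen (x i)) (Gen (y j)))) LZero"
proof (rule lcong_br_br_zero)
  show "lcong (Arels n) (LBr (sumy n) (Gen (y j))) LZero" if "j \<in> {1..n}"
    unfolding sumy_def using that by (intro lcong_br_lsum_zero1 Arels_y_y) auto
qed (rule Arels_sumy_x)

lemma Arels_x_pair_x_y:
  assumes "i \<in> {1..n}" "j \<in> {1..n}" "i \<noteq> j"
  shows "lcong (Arels n) (LBr (LAdd (Gen (x i)) (Gen (x j))) (LBr (Gen (x i)) (Gen (y j)))) LZero"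
proof -
  have "lcong (Arels n) (LBr (sumx n) (LBr (Gen (x i)) (Gen (y j))))
      (LBr (LAdd (Gen (x i)) (Gen (x j))) (LBr (Gen (x i)) (Gen (y j))))"
    unfolding sumx_def using assms by (intro lcong_br_lsum_two1 Arels_x_x_y) auto
  then show ?thesis using assms by (meson Arels_sumx_x_y lcong.sym lcong.trans)
qed

lemma Arels_y_pair_x_y:
  assumes "i \<in> {1..n}" "j \<in> {1..n}" "i \<noteq> j"
  shows "lcong (Arels n) (LBr (LAdd (Gen (y i)) (Gen (y j))) (LBr (Gen (x i)) (Gen (y j)))) LZero"
proof -
  have "lcong (Arels n) (LBr (sumy n) (LBr (Gen (x i)) (Gen (y j))))
      (LBr (LAdd (Gen (y i)) (Gen (y j))) (LBr (Gen (x i)) (Gen (y j))))"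
    unfolding sumy_def using assms by (intro lcong_br_lsum_two1 Arels_y_x_y) auto
  then show ?thesis using assms by (meson Arels_sumy_x_y lcong.sym lcong.trans)
qed

lemma Arels_infinitesimal_braid:
  assumes "i \<in> {1..n}" "j \<in> {1..n}" "k \<in> {1..n}" "i \<noteq> j" "i \<noteq> k" "j \<noteq> k"
  shows "lcong (Arels n) (LBr (LBr (Gen (x i)) (Gen (y j)))
           (LAdd (LBr (Gen (x i)) (Gen (y k))) (LBr (Gen (x j)) (Gen (y k))))) LZero"
proof -
  have "lcong (Arels n) (LAdd (LBr (Gen (x i)) (Gen (y k))) (LBr (Gen (x j)) (Gen (y k))))
      (LAdd (LBr (Gen (x k)) (Gen (y i))) (LBr (Gen (x k)) (Gen (y j))))"
    using assms by (intro lcong.add_cong Arels_x_y_symm) auto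
  also have "lcong (Arels n) \<dots> (LBr (Gen (x k)) (LAdd (Gen (y i)) (Gen (y j))))"
    by (rule lcong.sym, rule lcong.br_add_right)
  finally have sum: "lcong (Arels n) (LAdd (LBr (Gen (x i)) (Gen (y k))) (LBr (Gen (x j)) (Gen (y k))))
      (LBr (Gen (x k)) (LAdd (Gen (y i)) (Gen (y j))))" .
  show ?thesis
    by (rule lcong_br_zero_cong2[OF sum], rule lcong_br_br_zero; rule lcong_br_zero_swap,
        (rule Arels_x_x_y | rule Arels_y_pair_x_y)) (use assms in auto)
qed

lemma Arels_x_y_x_y_disjoint:
  assumes "i \<in> {1..n}" "j \<in> {1..n}" "k \<in> {1..n}" "l \<in> {1..n}"
    "i \<noteq> j" "i \<noteq> k" "i \<noteq> l" "j \<noteq> k" "j \<noteq> l" "k \<noteq> l"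
  shows "lcong (Arels n) (LBr (LBr (Gen (x i)) (Gen (y j))) (LBr (Gen (x k)) (Gen (y l)))) LZero"
  by (rule lcong_br_br_zero; rule lcong_br_zero_swap, (rule Arels_x_x_y | rule Arels_y_x_y))
    (use assms in auto)

lemma Arels_x_y_diag:
  assumes "i \<in> {1..n}"
  shows "lcong (Arels n) (LBr (Gen (x i)) (Gen (y i)))
     (LSmul (-1) (lsum (map (\<lambda>j. LBr (Gen (x i)) (Gen (y j))) (filter (\<lambda>j. j \<noteq> i) [1..<n+1]))))"
proof (rule lcong_eq_neg_if_add_zero)
  let ?L = "[1..<n+1]"
  let ?F = "filter (\<lambda>j. j \<noteq> i) ?L"
  have "lcong (Arels n) (LAdd (LBr (Gen (x i)) (Gen (y i))) (lsum (map (\<lambda>j. LBr (Gen (x i)) (Gen (y j))) ?F)))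
     (LAdd (LBr (Gen (x i)) (Gen (y i))) (lsum (map (\<lambda>j. LBr (Gen (x j)) (Gen (y i))) (remove1 i ?L))))"
    unfolding remove1_eq_filter[OF distinct_upt]
    using assms by (intro lcong_add_cong2 lcong_lsum_cong Arels_x_y_symm) auto
  also have "lcong (Arels n) \<dots> (lsum (map (\<lambda>j. LBr (Gen (x j)) (Gen (y i))) ?L))"
    by (rule lcong.sym, rule lcong_lsum_remove1) (use assms in auto)
  also have "lcong (Arels n) \<dots> (LBr (sumx n) (Gen (y i)))"
    unfolding sumx_def by (rule lcong.sym, rule lcong_br_lsum1)
  also have "lcong (Arels n) \<dots> LZero"
    using assms by (rule Arels_sumx_y)
  finally show "lcong (Arels n) (LAdd (LBr (Gen (x i)) (Gen (y i)))
      (lsum (map (\<lambda>j. LBr (Gen (x i)) (Gen (y j))) ?F))) LZero" .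
qed

lemma phiA_respects_trels:
  "(u, v) \<in> trels n \<Longrightarrow> lcong (Arels n) (lsubst phiA u) (lsubst phiA v)"
  unfolding trels_def
  apply (elim UnE)
  subgoal by (clarsimp, rule Arels_x_y_symm; simp)
  subgoal by (clarsimp, rule Arels_infinitesimal_braid; simp)
  subgoal by (clarsimp, rule Arels_x_y_x_y_disjoint; simp)
  subgoal by auto
  subgoal by (clarsimp, rule Arels_x_x; simp)
  subgoal by (clarsimp, rule Arels_y_y; simp)
  subgoal by (clarsimp simp: lneg_def o_def, rule Arels_x_y_diag[simplified]; simp)
  subgoal by (clarsimp, rule Arels_x_x_y; simp)
  subgoal by (clarsimp, rule Arels_y_x_y; simp)
  subgoal by (clarsimp, rule Arels_x_pair_x_y; simp)
  subgoal by (clarsimp, rule Arels_y_pair_x_y; simp)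
  done

lemma trels_t_symm: "i \<in> {1..n} \<Longrightarrow> j \<in> {1..n} \<Longrightarrow> i \<noteq> j \<Longrightarrow>
    lcong (trels n) (Gen (t i j)) (Gen (t j i))"
  by (rule lcong.rel) (simp add: trels_def)

lemma trels_x_y: "i \<in> {1..n} \<Longrightarrow> j \<in> {1..n} \<Longrightarrow> i \<noteq> j \<Longrightarrow>
    lcong (trels n) (LBr (Gen (x i)) (Gen (y j))) (Gen (t i j))"
  by (rule lcong.rel) (simp add: trels_def)

lemma trels_x_x: "i \<in> {1..n} \<Longrightarrow> j \<in> {1..n} \<Longrightarrow>
    lcong (trels n) (LBr (Gen (x i)) (Gen (x j))) LZero"
  by (cases "i = j") (simp add: lcong.br_alt, rule lcong.rel, simp add: trels_def)

lemma trels_y_y: "i \<in> {1..n} \<Longrightarrow> j \<in> {1..n} \<Longrightarrow>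
    lcong (trels n) (LBr (Gen (y i)) (Gen (y j))) LZero"
  by (cases "i = j") (simp add: lcong.br_alt, rule lcong.rel, simp add: trels_def)

lemma trels_x_y_diag: "i \<in> {1..n} \<Longrightarrow>
    lcong (trels n) (LBr (Gen (x i)) (Gen (y i)))
      (LSmul (-1) (lsum (map (\<lambda>j. Gen (t i j)) (filter (\<lambda>j. j \<noteq> i) [1..<n+1]))))"
  by (rule lcong.rel) (simp add: trels_def lneg_def)

lemma trels_x_t:
  "i \<in> {1..n} \<Longrightarrow> j \<in> {1..n} \<Longrightarrow> k \<in> {1..n} \<Longrightarrow> i \<noteq> j \<Longrightarrow> i \<noteq> k \<Longrightarrow> j \<noteq> k \<Longrightarrow>
    lcong (trels n) (LBr (Gen (x i)) (Gen (t j k))) LZero"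
  by (rule lcong.rel) (simp add: trels_def)

lemma trels_y_t:
  "i \<in> {1..n} \<Longrightarrow> j \<in> {1..n} \<Longrightarrow> k \<in> {1..n} \<Longrightarrow> i \<noteq> j \<Longrightarrow> i \<noteq> k \<Longrightarrow> j \<noteq> k \<Longrightarrow>
    lcong (trels n) (LBr (Gen (y i)) (Gen (t j k))) LZero"
  by (rule lcong.rel) (simp add: trels_def)

lemma trels_x_y_symm:
  assumes "i \<in> {1..n}" "j \<in> {1..n}" "i \<noteq> j"
  shows "lcong (trels n) (LBr (Gen (x i)) (Gen (y j))) (LBr (Gen (x j)) (Gen (y i)))"
proof -
  have "lcong (trels n) (LBr (Gen (x i)) (Gen (y j))) (Gen (t i j))" using assms by (rule trels_x_y)
  also have "lcong (trels n) \<dots> (Gen (t j i))" using assms by (rule trels_t_symm)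
  also have "lcong (trels n) \<dots> (LBr (Gen (x j)) (Gen (y i)))"
    by (rule lcong.sym, rule trels_x_y) (use assms in auto)
  finally show ?thesis .
qed

lemma trels_lsum_x_y_zero:
  assumes i: "i \<in> {1..n}" and fi: "lcong (trels n) (f i) (LBr (Gen (x i)) (Gen (y i)))"
    and fj: "\<And>j. j \<in> {1..n} \<Longrightarrow> j \<noteq> i \<Longrightarrow> lcong (trels n) (f j) (Gen (t i j))"
  shows "lcong (trels n) (lsum (map f [1..<n+1])) LZero"
proof -
  let ?S = "lsum (map (\<lambda>j. Gen (t i j)) (filter (\<lambda>j. j \<noteq> i) [1..<n+1]))"
  have "lcong (trels n) (lsum (map f [1..<n+1])) (LAdd (f i) (lsum (map f (remove1 i [1..<n+1]))))"
    by (rule lcong_lsum_remove1) (use i in auto)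
  also have "lcong (trels n) \<dots> (LAdd (LSmul (-1) ?S) ?S)"
    unfolding remove1_eq_filter[OF distinct_upt]
  proof (rule lcong.add_cong)
    show "lcong (trels n) (f i) (LSmul (-1) ?S)"
      using fi trels_x_y_diag[OF i] by (rule lcong.trans)
    show "lcong (trels n) (lsum (map f (filter (\<lambda>j. j \<noteq> i) [1..<n+1]))) ?S"
      by (rule lcong_lsum_cong, rule fj) auto
  qed
  also have "lcong (trels n) \<dots> LZero" by (rule lcong_neg_add_self)
  finally show ?thesis .
qed

lemma trels_sumx_y: "i \<in> {1..n} \<Longrightarrow> lcong (trels n) (LBr (sumx n) (Gen (y i))) LZero"
  unfolding sumx_def
  by (rule lcong.trans[OF lcong_br_lsum1], rule trels_lsum_x_y_zero)
    (auto intro!: lcong.trans[OF trels_x_y trels_t_symm])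

lemma trels_sumy_x: "i \<in> {1..n} \<Longrightarrow> lcong (trels n) (LBr (sumy n) (Gen (x i))) LZero"
  unfolding sumy_def
  by (rule lcong_br_zero_swap, rule lcong.trans[OF lcong_br_lsum2], rule trels_lsum_x_y_zero)
    (auto intro: trels_x_y)

lemma trels_x_x_y:
  "i \<in> {1..n} \<Longrightarrow> j \<in> {1..n} \<Longrightarrow> k \<in> {1..n} \<Longrightarrow> i \<noteq> j \<Longrightarrow> i \<noteq> k \<Longrightarrow> j \<noteq> k \<Longrightarrow>
    lcong (trels n) (LBr (Gen (x i)) (LBr (Gen (x j)) (Gen (y k)))) LZero"
  by (rule lcong_br_zero_cong2[OF trels_x_y], simp_all, rule trels_x_t) auto

lemma trels_y_y_x:
  "i \<in> {1..n} \<Longrightarrow> j \<in> {1..n} \<Longrightarrow> k \<in> {1..n} \<Longrightarrow> i \<noteq> j \<Longrightarrow> i \<noteq> k \<Longrightarrow> j \<noteq> k \<Longrightarrow>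
    lcong (trels n) (LBr (Gen (y i)) (LBr (Gen (y j)) (Gen (x k)))) LZero"
  by (rule lcong_br_zero_swap_inner, rule lcong_br_zero_cong2[OF trels_x_y], simp_all, rule trels_y_t) auto

lemma trels_Arels_rel: "(u, v) \<in> Arels n \<Longrightarrow> lcong (trels n) u v"
  unfolding Arels_def
  apply (elim UnE)
  subgoal by (clarsimp, rule trels_x_y_symm; simp)
  subgoal by (clarsimp, rule trels_x_x; simp)
  subgoal by (clarsimp, rule trels_y_y; simp)
  subgoal by (clarsimp, rule trels_sumx_y; simp)
  subgoal by (clarsimp, rule trels_sumy_x; simp)
  subgoal by (clarsimp, rule trels_x_x_y; simp)
  subgoal by (clarsimp, rule trels_y_y_x; simp)
  done

lemma lcong_Arels_imp_trels:
  assumes "lcong (Arels n) s s'"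
  shows "lcong (trels n) s s'"
  using lcong_lsubst[OF assms, of "trels n" Gen] by (simp add: trels_Arels_rel)

lemma pres_iso_A: "pres_iso (tgens n) (trels n) (xygens n) (Arels n) phiA"
proof (rule pres_isoI[where psi = Gen])
  fix g assume "g \<in> tgens n"
  then show "gens (phiA g) \<subseteq> xygens n" by (auto simp: tgens_def xygens_def)
next
  fix g assume "g \<in> xygens n"
  then show "gens (Gen g) \<subseteq> tgens n" by (auto simp: tgens_def xygens_def)
next
  fix u v assume "(u, v) \<in> trels n"
  then show "lcong (Arels n) (lsubst phiA u) (lsubst phiA v)" by (rule phiA_respects_trels)
next
  fix u v assume "(u, v) \<in> Arels n"
  then show "lcong (trels n) (lsubst Gen u) (lsubst Gen v)" by (simp add: trels_Arels_rel)
next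
  fix g assume "g \<in> tgens n"
  then show "lcong (trels n) (lsubst Gen (phiA g)) (Gen g)"
    by (auto simp: tgens_def intro!: trels_x_y)
next
  fix g assume "g \<in> xygens n"
  then show "lcong (Arels n) (lsubst phiA (Gen g)) (Gen g)" by (auto simp: xygens_def)
qed

section \<open>Presentation (B)\<close>

abbreviation xtail :: "nat \<Rightarrow> nat \<Rightarrow> (tgen, 'k) lterm" where
  "xtail n i \<equiv> lsum (map (\<lambda>j. Gen (x j)) [i..<Suc n])"

abbreviation ytail :: "nat \<Rightarrow> nat \<Rightarrow> (tgen, 'k) lterm" where
  "ytail n i \<equiv> lsum (map (\<lambda>j. Gen (y j)) [i..<Suc n])"

lemma sumx_eq_xtail: "sumx n = xtail n 1"
  by (simp add: sumx_def)

lemma sumy_eq_ytail: "sumy n = ytail n 1"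
  by (simp add: sumy_def)

lemma Arels_xtail_xtail: "i \<in> {1..n} \<Longrightarrow> j \<in> {1..n} \<Longrightarrow>
    lcong (Arels n) (LBr (xtail n i) (xtail n j)) LZero"
  by (rule lcong_br_lsum_zero1, rule lcong_br_lsum_zero2, rule Arels_x_x) auto

lemma Arels_ytail_ytail: "i \<in> {1..n} \<Longrightarrow> j \<in> {1..n} \<Longrightarrow>
    lcong (Arels n) (LBr (ytail n i) (ytail n j)) LZero"
  by (rule lcong_br_lsum_zero1, rule lcong_br_lsum_zero2, rule Arels_y_y) auto

lemma Arels_xtail1_ytail: "j \<in> {1..n} \<Longrightarrow> lcong (Arels n) (LBr (xtail n 1) (ytail n j)) LZero"
  by (rule lcong_br_lsum_zero2, rule Arels_sumx_y[unfolded sumx_eq_xtail]) auto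

lemma Arels_ytail1_xtail: "j \<in> {1..n} \<Longrightarrow> lcong (Arels n) (LBr (ytail n 1) (xtail n j)) LZero"
  by (rule lcong_br_lsum_zero2, rule Arels_sumy_x[unfolded sumy_eq_ytail]) auto

lemma Arels_xtail_ytail_symm:
  assumes "j \<in> {1..n}" "k \<in> {1..n}"
  shows "lcong (Arels n) (LBr (xtail n j) (ytail n k)) (LBr (xtail n k) (ytail n j))"
proof -
  let ?Lj = "[j..<Suc n]" and ?Lk = "[k..<Suc n]"
  have "lcong (Arels n) (LBr (xtail n j) (ytail n k))
      (lsum (map (\<lambda>p. LBr (Gen (x p)) (ytail n k)) ?Lj))"
    by (rule lcong_br_lsum1)
  also have "lcong (Arels n) \<dots>
      (lsum (map (\<lambda>p. lsum (map (\<lambda>q. LBr (Gen (x p)) (Gen (y q))) ?Lk)) ?Lj))"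
    by (rule lcong_lsum_cong, rule lcong_br_lsum2)
  also have "lcong (Arels n) \<dots>
      (lsum (map (\<lambda>p. lsum (map (\<lambda>q. LBr (Gen (x q)) (Gen (y p))) ?Lk)) ?Lj))"
    by (rule lcong_lsum_cong, rule lcong_lsum_cong, rule Arels_x_y_symm) (use assms in auto)
  also have "lcong (Arels n) \<dots>
      (lsum (map (\<lambda>q. lsum (map (\<lambda>p. LBr (Gen (x q)) (Gen (y p))) ?Lj)) ?Lk))"
    by (rule lcong_lsum_commute)
  also have "lcong (Arels n) \<dots> (lsum (map (\<lambda>q. LBr (Gen (x q)) (ytail n j)) ?Lk))"
    by (rule lcong_lsum_cong, rule lcong.sym, rule lcong_br_lsum2)
  also have "lcong (Arels n) \<dots> (LBr (xtail n k) (ytail n j))"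
    by (rule lcong.sym, rule lcong_br_lsum1)
  finally show ?thesis .
qed

lemma Arels_xtail_y_x:
  assumes "1 \<le> i" "i \<le> p" "p < q" "q \<le> n"
  shows "lcong (Arels n) (LBr (xtail n i) (LBr (Gen (y q)) (Gen (x p)))) LZero"
proof (rule lcong_br_zero_swap_inner)
  have "lcong (Arels n) (LBr (xtail n i) (LBr (Gen (x p)) (Gen (y q))))
      (LBr (LAdd (Gen (x p)) (Gen (x q))) (LBr (Gen (x p)) (Gen (y q))))"
    using assms by (intro lcong_br_lsum_two1 Arels_x_x_y) auto
  also have "lcong (Arels n) \<dots> LZero"
    using assms by (intro Arels_x_pair_x_y) auto
  finally show "lcong (Arels n) (LBr (xtail n i) (LBr (Gen (x p)) (Gen (y q)))) LZero" .
qed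

lemma Arels_ytail_y_x:
  assumes "1 \<le> i" "i \<le> p" "p < q" "q \<le> n"
  shows "lcong (Arels n) (LBr (ytail n i) (LBr (Gen (y q)) (Gen (x p)))) LZero"
proof (rule lcong_br_zero_swap_inner)
  have "lcong (Arels n) (LBr (ytail n i) (LBr (Gen (x p)) (Gen (y q))))
      (LBr (LAdd (Gen (y p)) (Gen (y q))) (LBr (Gen (x p)) (Gen (y q))))"
    using assms by (intro lcong_br_lsum_two1 Arels_y_x_y) auto
  also have "lcong (Arels n) \<dots> LZero"
    using assms by (intro Arels_y_pair_x_y) auto
  finally show "lcong (Arels n) (LBr (ytail n i) (LBr (Gen (x p)) (Gen (y q)))) LZero" .
qed

lemma Arels_br_phiB_cjk:
  fixes s :: "(tgen, 'k::field) lterm"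
  assumes jk: "j \<le> k" "k \<le> n"
    and commutes: "\<And>p q. j \<le> p \<Longrightarrow> p < k \<Longrightarrow> k \<le> q \<Longrightarrow> q \<le> n \<Longrightarrow>
      lcong (Arels n) (LBr s (LBr (Gen (y q)) (Gen (x p)))) LZero"
  shows "lcong (Arels n) (LBr s (LBr (ytail n k) (ldiff (xtail n k) (xtail n j)))) LZero"
proof -
  let ?P = "lsum (map (\<lambda>p. Gen (x p)) [j..<k]) :: (tgen, 'k) lterm"
  have "[j..<Suc n] = [j..<k] @ [k..<Suc n]"
    using upt_add_eq_append[of j k "Suc n - k"] jk by simp
  then have "lcong (Arels n) (LBr (ytail n k) (ldiff (xtail n k) (xtail n j)))
      (LBr (ytail n k) (ldiff (xtail n k) (LAdd ?P (xtail n k))))"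
    by (intro lcong_br_cong2 lcong_ldiff_cong lcong.refl) (simp add: lcong_lsum_append)
  also have "lcong (Arels n) \<dots> (LBr (ytail n k) (LSmul (-1) ?P))"
    by (rule lcong_br_cong2, rule lcong_ldiff_add_self)
  also have "lcong (Arels n) \<dots> (LSmul (-1) (LBr (ytail n k) ?P))"
    by (rule lcong.br_smul_right)
  finally have expand: "lcong (Arels n) (LBr (ytail n k) (ldiff (xtail n k) (xtail n j)))
      (LSmul (-1) (LBr (ytail n k) ?P))" .
  have "lcong (Arels n) (LBr s (LBr (ytail n k) ?P)) LZero"
  proof (rule lcong_br_zero_cong2[OF lcong_br_lsum2], rule lcong_br_lsum_zero2)
    fix p assume p: "p \<in> set [j..<k]"
    show "lcong (Arels n) (LBr s (LBr (ytail n k) (Gen (x p)))) LZero"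
    proof (rule lcong_br_zero_cong2[OF lcong_br_lsum1], rule lcong_br_lsum_zero2)
      fix q assume q: "q \<in> set [k..<Suc n]"
      show "lcong (Arels n) (LBr s (LBr (Gen (y q)) (Gen (x p)))) LZero"
        using p q by (intro commutes) auto
    qed
  qed
  then show ?thesis
    by (rule lcong_br_zero_cong2[OF expand, OF lcong.trans[OF lcong.br_smul_right lcong_smul_zero]])
qed

lemma phiB_respects_Brels:
  "(u, v) \<in> Brels n \<Longrightarrow> lcong (Arels n) (lsubst (phiB n) u) (lsubst (phiB n) v)"
  unfolding Brels_def
  apply (elim UnE)
  subgoal by (clarsimp, rule Arels_xtail_xtail; simp)
  subgoal by (clarsimp, rule Arels_ytail_ytail; simp)
  subgoal by (clarsimp, rule Arels_xtail1_ytail[simplified]; simp)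
  subgoal by (clarsimp, rule Arels_ytail1_xtail[simplified]; simp)
  subgoal by (clarsimp, rule Arels_xtail_ytail_symm; simp)
  subgoal by (clarsimp simp: cjk_def, rule Arels_br_phiB_cjk, simp_all, rule Arels_xtail_y_x; simp)
  subgoal by (clarsimp simp: cjk_def, rule Arels_br_phiB_cjk, simp_all, rule Arels_ytail_y_x; simp)
  done

definition agen :: "nat \<Rightarrow> nat \<Rightarrow> (abgen, 'k) lterm" where
  "agen n i = (if i \<le> n then Gen (a i) else LZero)"

definition bgen :: "nat \<Rightarrow> nat \<Rightarrow> (abgen, 'k) lterm" where
  "bgen n i = (if i \<le> n then Gen (b i) else LZero)"

lemma agen_le [simp]: "i \<le> n \<Longrightarrow> agen n i = Gen (a i)"
  and agen_gt [simp]: "\<not> i \<le> n \<Longrightarrow> agen n i = LZero"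
  and bgen_le [simp]: "i \<le> n \<Longrightarrow> bgen n i = Gen (b i)"
  and bgen_gt [simp]: "\<not> i \<le> n \<Longrightarrow> bgen n i = LZero"
  by (simp_all add: agen_def bgen_def)

fun psiB :: "nat \<Rightarrow> tgen \<Rightarrow> (abgen, 'k::field) lterm" where
  "psiB n (x i) = ldiff (agen n i) (agen n (Suc i))"
| "psiB n (y i) = ldiff (bgen n i) (bgen n (Suc i))"
| "psiB n (t i j) = LBr (ldiff (agen n i) (agen n (Suc i))) (ldiff (bgen n j) (bgen n (Suc j)))"

lemma Brels_agen_agen: "1 \<le> i \<Longrightarrow> 1 \<le> j \<Longrightarrow> lcong (Brels n) (LBr (agen n i) (agen n j)) LZero"
  by (cases "i \<le> n \<and> j \<le> n")
    (simp, rule lcong.rel, simp add: Brels_def, auto simp: lcong_br_LZero1 lcong_br_LZero2)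

lemma Brels_bgen_bgen: "1 \<le> i \<Longrightarrow> 1 \<le> j \<Longrightarrow> lcong (Brels n) (LBr (bgen n i) (bgen n j)) LZero"
  by (cases "i \<le> n \<and> j \<le> n")
    (simp, rule lcong.rel, simp add: Brels_def, auto simp: lcong_br_LZero1 lcong_br_LZero2)

lemma Brels_agen_bgen_symm:
  assumes "1 \<le> i" "1 \<le> j"
  shows "lcong (Brels n) (LBr (agen n i) (bgen n j)) (LBr (agen n j) (bgen n i))"
proof (cases "i \<le> n \<and> j \<le> n")
  case True
  then have gen: "agen n i = Gen (a i)" "agen n j = Gen (a j)"
      "bgen n i = Gen (b i)" "bgen n j = Gen (b j)"
    by simp_all
  show ?thesis unfolding gen by (rule lcong.rel) (use assms True in \<open>simp add: Brels_def\<close>)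
next
  case False
  then have "lcong (Brels n) (LBr (agen n i) (bgen n j)) LZero"
    and "lcong (Brels n) (LBr (agen n j) (bgen n i)) LZero"
    by (auto simp: lcong_br_LZero1 lcong_br_LZero2)
  then show ?thesis by (rule lcong.trans[OF _ lcong.sym])
qed

lemma Brels_a1_bgen: "1 \<le> n \<Longrightarrow> 1 \<le> j \<Longrightarrow> lcong (Brels n) (LBr (Gen (a 1)) (bgen n j)) LZero"
  by (cases "j \<le> n") (simp, rule lcong.rel, simp add: Brels_def, simp add: lcong_br_LZero2)

lemma Brels_b1_agen: "1 \<le> n \<Longrightarrow> 1 \<le> j \<Longrightarrow> lcong (Brels n) (LBr (Gen (b 1)) (agen n j)) LZero"
  by (cases "j \<le> n") (simp, rule lcong.rel, simp add: Brels_def, simp add: lcong_br_LZero2)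

lemma Brels_a_c:
  "1 \<le> r \<Longrightarrow> r \<le> p \<Longrightarrow> p \<le> q \<Longrightarrow> q \<le> n \<Longrightarrow> lcong (Brels n) (LBr (Gen (a r)) (cjk p q)) LZero"
  unfolding Brels_def by (rule lcong.rel, rule UnI1, rule UnI2) fastforce

lemma Brels_b_c:
  "1 \<le> r \<Longrightarrow> r \<le> p \<Longrightarrow> p \<le> q \<Longrightarrow> q \<le> n \<Longrightarrow> lcong (Brels n) (LBr (Gen (b r)) (cjk p q)) LZero"
  unfolding Brels_def by (rule lcong.rel, rule UnI2) fastforce

lemma Brels_a_a_b:
  assumes "1 \<le> r" "r \<le> p" "p \<le> q" "q \<le> n"
  shows "lcong (Brels n) (LBr (Gen (a r)) (LBr (Gen (a p)) (Gen (b q))))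
                         (LBr (Gen (a r)) (LBr (Gen (a q)) (Gen (b q))))"
proof -
  let ?V = "\<lambda>s. LBr (Gen (a r)) (LBr (Gen (b q)) (Gen (a s))) :: (abgen, 'k) lterm"
  have flip: "lcong (Brels n) (LBr (Gen (a r)) (LBr (Gen (a s)) (Gen (b q)))) (LSmul (-1) (?V s))" for s
    by (rule lcong.trans[OF lcong_br_cong2[OF lcong_br_anticomm]], rule lcong.br_smul_right)
  have "lcong (Brels n) (ldiff (?V q) (?V p)) LZero"
    by (rule lcong.trans[OF lcong.sym[OF lcong_br_br_ldiff]], rule Brels_a_c[OF assms, unfolded cjk_def])
  then have "lcong (Brels n) (LSmul (-1) (?V p)) (LSmul (-1) (?V q))"
    by (rule lcong.smul_cong[OF lcong.sym[OF lcong_eq_if_ldiff_zero]])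
  then show ?thesis
    by (rule lcong.trans[OF flip lcong.trans[OF _ lcong.sym[OF flip]]])
qed

lemma Brels_b_b_a:
  assumes "1 \<le> r" "r \<le> p" "p \<le> q" "q \<le> n"
  shows "lcong (Brels n) (LBr (Gen (b r)) (LBr (Gen (b q)) (Gen (a p))))
                         (LBr (Gen (b r)) (LBr (Gen (b q)) (Gen (a q))))"
proof -
  have "lcong (Brels n) (ldiff (LBr (Gen (b r)) (LBr (Gen (b q)) (Gen (a q))))
                              (LBr (Gen (b r)) (LBr (Gen (b q)) (Gen (a p))))) LZero"
    by (rule lcong.trans[OF lcong.sym[OF lcong_br_br_ldiff]], rule Brels_b_c[OF assms, unfolded cjk_def])
  then show ?thesis by (rule lcong.sym[OF lcong_eq_if_ldiff_zero])
qed

lemma Brels_psiB_x_x: "1 \<le> i \<Longrightarrow> 1 \<le> j \<Longrightarrow> lcong (Brels n) (LBr (psiB n (x i)) (psiB n (x j))) LZero"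
  by (simp only: psiB.simps, rule lcong_br_ldiff_zero1; rule lcong_br_ldiff_zero2; rule Brels_agen_agen; simp)

lemma Brels_psiB_y_y: "1 \<le> i \<Longrightarrow> 1 \<le> j \<Longrightarrow> lcong (Brels n) (LBr (psiB n (y i)) (psiB n (y j))) LZero"
  by (simp only: psiB.simps, rule lcong_br_ldiff_zero1; rule lcong_br_ldiff_zero2; rule Brels_bgen_bgen; simp)

lemma Brels_psiB_x_y_symm:
  assumes "1 \<le> i" "1 \<le> j"
  shows "lcong (Brels n) (LBr (psiB n (x i)) (psiB n (y j))) (LBr (psiB n (x j)) (psiB n (y i)))"
proof -
  have "lcong (Brels n) (LBr (psiB n (x i)) (psiB n (y j)))
     (ldiff (ldiff (LBr (agen n i) (bgen n j)) (LBr (agen n i) (bgen n (Suc j))))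
            (ldiff (LBr (agen n (Suc i)) (bgen n j)) (LBr (agen n (Suc i)) (bgen n (Suc j)))))"
    by (simp only: psiB.simps, rule lcong_br_ldiff_ldiff)
  also have "lcong (Brels n) \<dots>
     (ldiff (ldiff (LBr (agen n i) (bgen n j)) (LBr (agen n (Suc i)) (bgen n j)))
            (ldiff (LBr (agen n i) (bgen n (Suc j))) (LBr (agen n (Suc i)) (bgen n (Suc j)))))"
    by (rule lcong_ldiff_ldiff_swap)
  also have "lcong (Brels n) \<dots>
     (ldiff (ldiff (LBr (agen n j) (bgen n i)) (LBr (agen n j) (bgen n (Suc i))))
            (ldiff (LBr (agen n (Suc j)) (bgen n i)) (LBr (agen n (Suc j)) (bgen n (Suc i)))))"
    by (rule lcong_ldiff_cong; rule lcong_ldiff_cong; rule Brels_agen_bgen_symm) (use assms in simp_all)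
  also have "lcong (Brels n) \<dots> (LBr (psiB n (x j)) (psiB n (y i)))"
    by (simp only: psiB.simps, rule lcong.sym, rule lcong_br_ldiff_ldiff)
  finally show ?thesis .
qed

lemma Brels_agen_psiB_x_bgen:
  assumes "1 \<le> m" "m \<le> p" "p < s" "s \<le> Suc n"
  shows "lcong (Brels n) (LBr (agen n m) (LBr (psiB n (x p)) (bgen n s))) LZero"
proof (cases "s = Suc n")
  case True
  then show ?thesis by (simp add: lcong_br_LZero2 lcong_br_zero2)
next
  case False
  then have le: "s \<le> n" "m \<le> n" "p \<le> n" "Suc p \<le> n" using assms by auto
  have "lcong (Brels n) (LBr (agen n m) (LBr (psiB n (x p)) (bgen n s)))
     (ldiff (LBr (Gen (a m)) (LBr (Gen (a p)) (Gen (b s))))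
            (LBr (Gen (a m)) (LBr (Gen (a (Suc p))) (Gen (b s)))))"
    by (simp only: psiB.simps agen_le bgen_le le, rule lcong.trans[OF lcong_br_cong2[OF lcong_br_ldiff1]],
        rule lcong_br_ldiff2)
  also have "lcong (Brels n) \<dots> (ldiff (LBr (Gen (a m)) (LBr (Gen (a s)) (Gen (b s))))
                                     (LBr (Gen (a m)) (LBr (Gen (a s)) (Gen (b s)))))"
    by (rule lcong_ldiff_cong; rule Brels_a_a_b) (use assms le in auto)
  also have "lcong (Brels n) \<dots> LZero" by (rule lcong_ldiff_self)
  finally show ?thesis .
qed

lemma Brels_bgen_bgen_psiB_x:
  assumes "1 \<le> m" "m \<le> p" "p < s" "s \<le> Suc n"
  shows "lcong (Brels n) (LBr (bgen n m) (LBr (bgen n s) (psiB n (x p)))) LZero"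
proof (cases "s = Suc n")
  case True
  then show ?thesis by (simp add: lcong_br_LZero1 lcong_br_zero2)
next
  case False
  then have le: "s \<le> n" "m \<le> n" "p \<le> n" "Suc p \<le> n" using assms by auto
  have "lcong (Brels n) (LBr (bgen n m) (LBr (bgen n s) (psiB n (x p))))
     (ldiff (LBr (Gen (b m)) (LBr (Gen (b s)) (Gen (a p))))
            (LBr (Gen (b m)) (LBr (Gen (b s)) (Gen (a (Suc p))))))"
    by (simp only: psiB.simps agen_le bgen_le le, rule lcong_br_br_ldiff)
  also have "lcong (Brels n) \<dots> (ldiff (LBr (Gen (b m)) (LBr (Gen (b s)) (Gen (a s))))
                                     (LBr (Gen (b m)) (LBr (Gen (b s)) (Gen (a s)))))"
    by (rule lcong_ldiff_cong; rule Brels_b_b_a) (use assms le in auto)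
  also have "lcong (Brels n) \<dots> LZero" by (rule lcong_ldiff_self)
  finally show ?thesis .
qed

lemma Brels_psiB_x_x_y_ordered:
  assumes "1 \<le> r" "r < p" "p < q" "q \<le> n"
  shows "lcong (Brels n) (LBr (psiB n (x r)) (LBr (psiB n (x p)) (psiB n (y q)))) LZero"
proof -
  have expand: "lcong (Brels n) (LBr (psiB n (x p)) (psiB n (y q)))
     (ldiff (LBr (psiB n (x p)) (bgen n q)) (LBr (psiB n (x p)) (bgen n (Suc q))))"
    by (simp only: psiB.simps(2), rule lcong_br_ldiff2)
  show ?thesis
    by (rule lcong_br_zero_cong2[OF expand], rule lcong_br_ldiff_zero2; simp only: psiB.simps(1);
        rule lcong_br_ldiff_zero1; rule Brels_agen_psiB_x_bgen[simplified psiB.simps]) (use assms in auto)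
qed

lemma Brels_psiB_y_y_x_ordered:
  assumes "1 \<le> r" "r < p" "p < q" "q \<le> n"
  shows "lcong (Brels n) (LBr (psiB n (y r)) (LBr (psiB n (y q)) (psiB n (x p)))) LZero"
proof -
  have expand: "lcong (Brels n) (LBr (psiB n (y q)) (psiB n (x p)))
     (ldiff (LBr (bgen n q) (psiB n (x p))) (LBr (bgen n (Suc q)) (psiB n (x p))))"
    by (simp only: psiB.simps(2), rule lcong_br_ldiff1)
  show ?thesis
    by (rule lcong_br_zero_cong2[OF expand], rule lcong_br_ldiff_zero2; simp only: psiB.simps(2);
        rule lcong_br_ldiff_zero1; rule Brels_bgen_bgen_psiB_x) (use assms in auto)
qed

lemma Brels_psiB_x_x_y:
  assumes "i \<in> {1..n}" "j \<in> {1..n}" "k \<in> {1..n}" "i \<noteq> j" "i \<noteq> k" "j \<noteq> k"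
  shows "lcong (Brels n) (LBr (psiB n (x i)) (LBr (psiB n (x j)) (psiB n (y k)))) LZero"
  using _ _ _ assms
proof (rule lcong_zero_on_distinct_triples)
  fix r p q assume "r \<in> {1..n}" "p \<in> {1..n}" "q \<in> {1..n}"
  then show "lcong (Brels n) (LBr (psiB n (x r)) (LBr (psiB n (x p)) (psiB n (y q))))
                             (LBr (psiB n (x p)) (LBr (psiB n (x r)) (psiB n (y q))))"
    by (intro lcong_br_left_commute Brels_psiB_x_x) auto
next
  fix r p q assume "r \<in> {1..n}" "p \<in> {1..n}" "q \<in> {1..n}"
  then show "lcong (Brels n) (LBr (psiB n (x r)) (LBr (psiB n (x p)) (psiB n (y q))))
                             (LBr (psiB n (x r)) (LBr (psiB n (x q)) (psiB n (y p))))"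
    by (intro lcong_br_cong2 Brels_psiB_x_y_symm) auto
next
  fix r p q assume "r \<in> {1..n}" "p \<in> {1..n}" "q \<in> {1..n}" "r < p" "p < q"
  then show "lcong (Brels n) (LBr (psiB n (x r)) (LBr (psiB n (x p)) (psiB n (y q)))) LZero"
    by (intro Brels_psiB_x_x_y_ordered) auto
qed

lemma Brels_psiB_y_y_x:
  assumes "i \<in> {1..n}" "j \<in> {1..n}" "k \<in> {1..n}" "i \<noteq> j" "i \<noteq> k" "j \<noteq> k"
  shows "lcong (Brels n) (LBr (psiB n (y i)) (LBr (psiB n (y j)) (psiB n (x k)))) LZero"
proof -
  have swap23: "lcong (Brels n) (LBr (psiB n (y r)) (LBr (psiB n (y p)) (psiB n (x q))))
                                (LBr (psiB n (y r)) (LBr (psiB n (y q)) (psiB n (x p))))"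
    if "r \<in> {1..n}" "p \<in> {1..n}" "q \<in> {1..n}" for r p q
    by (rule lcong_br_cong2, rule lcong_br_swap, rule Brels_psiB_x_y_symm) (use that in auto)
  show ?thesis
    using _ swap23 _ assms
  proof (rule lcong_zero_on_distinct_triples)
    fix r p q assume "r \<in> {1..n}" "p \<in> {1..n}" "q \<in> {1..n}"
    then show "lcong (Brels n) (LBr (psiB n (y r)) (LBr (psiB n (y p)) (psiB n (x q))))
                               (LBr (psiB n (y p)) (LBr (psiB n (y r)) (psiB n (x q))))"
      by (intro lcong_br_left_commute Brels_psiB_y_y) auto
  next
    fix r p q assume rpq: "r \<in> {1..n}" "p \<in> {1..n}" "q \<in> {1..n}" "r < p" "p < q"
    show "lcong (Brels n) (LBr (psiB n (y r)) (LBr (psiB n (y p)) (psiB n (x q)))) LZero"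
      by (rule lcong.trans[OF swap23[OF rpq(1-3)]], rule Brels_psiB_y_y_x_ordered) (use rpq in auto)
  qed
qed

lemma Brels_psiB_sumx: "1 \<le> n \<Longrightarrow> lcong (Brels n) (lsubst (psiB n) (sumx n)) (Gen (a 1))"
  using lcong_lsum_telescope[of "agen n" n 1 "Brels n"] by (simp add: sumx_def o_def)

lemma Brels_psiB_sumy: "1 \<le> n \<Longrightarrow> lcong (Brels n) (lsubst (psiB n) (sumy n)) (Gen (b 1))"
  using lcong_lsum_telescope[of "bgen n" n 1 "Brels n"] by (simp add: sumy_def o_def)

lemma psiB_respects_Arels:
  "(u, v) \<in> Arels n \<Longrightarrow> lcong (Brels n) (lsubst (psiB n) u) (lsubst (psiB n) v)"
  unfolding Arels_def
  apply (elim UnE)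
  subgoal by (clarsimp simp del: psiB.simps, rule Brels_psiB_x_y_symm; simp)
  subgoal by (clarsimp simp del: psiB.simps, rule Brels_psiB_x_x; simp)
  subgoal by (clarsimp simp del: psiB.simps, rule Brels_psiB_y_y; simp)
  subgoal by (clarsimp simp del: psiB.simps, rule lcong_br_zero_cong1[OF Brels_psiB_sumx], simp,
      simp only: psiB.simps, rule lcong_br_ldiff_zero2; rule Brels_a1_bgen; simp)
  subgoal by (clarsimp simp del: psiB.simps, rule lcong_br_zero_cong1[OF Brels_psiB_sumy], simp,
      simp only: psiB.simps, rule lcong_br_ldiff_zero2; rule Brels_b1_agen; simp)
  subgoal by (clarsimp simp del: psiB.simps, rule Brels_psiB_x_x_y; simp)
  subgoal by (clarsimp simp del: psiB.simps, rule Brels_psiB_y_y_x; simp)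
  done

lemma lsubst_psiB_phiA: "lsubst (psiB n) (phiA g) = psiB n g"
  by (cases g) simp_all

lemma psiB_respects_trels:
  assumes "(u, v) \<in> trels n"
  shows "lcong (Brels n) (lsubst (psiB n) u) (lsubst (psiB n) v)"
proof -
  have "lcong (Arels n) (lsubst phiA u) (lsubst phiA v)"
    using assms by (rule phiA_respects_trels)
  then have "lcong (Brels n) (lsubst (psiB n) (lsubst phiA u)) (lsubst (psiB n) (lsubst phiA v))"
    using psiB_respects_Arels by (rule lcong_lsubst)
  then show ?thesis by (simp only: lsubst_lsubst lsubst_psiB_phiA)
qed

lemma phiB_psiB_x: "1 \<le> i \<Longrightarrow> i \<le> n \<Longrightarrow> lcong R (lsubst (phiB n) (psiB n (x i))) (Gen (x i))"
  by (cases "Suc i \<le> n") (simp_all add: upt_conv_Cons lcong_add_ldiff_cancel)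

lemma phiB_psiB_y: "1 \<le> i \<Longrightarrow> i \<le> n \<Longrightarrow> lcong R (lsubst (phiB n) (psiB n (y i))) (Gen (y i))"
  by (cases "Suc i \<le> n") (simp_all add: upt_conv_Cons lcong_add_ldiff_cancel)

lemma phiB_psiB: "g \<in> tgens n \<Longrightarrow> lcong (trels n) (lsubst (phiB n) (psiB n g)) (Gen g)"
proof (induction g)
  case (t i j)
  then have "1 \<le> i" "i \<le> n" "1 \<le> j" "j \<le> n" "i \<noteq> j" by (auto simp: tgens_def)
  then have "lcong (trels n) (LBr (lsubst (phiB n) (psiB n (x i))) (lsubst (phiB n) (psiB n (y j))))
      (LBr (Gen (x i)) (Gen (y j)))"
    by (intro lcong.br_cong phiB_psiB_x phiB_psiB_y)
  also have "lcong (trels n) \<dots> (Gen (t i j))"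
    using \<open>1 \<le> i\<close> \<open>i \<le> n\<close> \<open>1 \<le> j\<close> \<open>j \<le> n\<close> \<open>i \<noteq> j\<close> by (intro trels_x_y) auto
  finally show ?case by simp
qed (auto simp: tgens_def simp del: psiB.simps intro: phiB_psiB_x phiB_psiB_y)

lemma psiB_phiB: "g \<in> abgens n \<Longrightarrow> lcong (Brels n) (lsubst (psiB n) (phiB n g)) (Gen g)"
proof (induction g)
  case (a i)
  then show ?case using lcong_lsum_telescope[of "agen n" n i "Brels n"] by (simp add: abgens_def o_def)
next
  case (b i)
  then show ?case using lcong_lsum_telescope[of "bgen n" n i "Brels n"] by (simp add: abgens_def o_def)
qed

lemma gens_psiB: "g \<in> tgens n \<Longrightarrow> gens (psiB n g) \<subseteq> abgens n"
  by (induction g) (auto simp: tgens_def abgens_def agen_def bgen_def split: if_splits)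

lemma pres_iso_B: "pres_iso (abgens n) (Brels n) (tgens n) (trels n) (phiB n)"
proof (rule pres_isoI[where psi = "psiB n"])
  fix g assume "g \<in> abgens n"
  then show "gens (phiB n g) \<subseteq> tgens n" by (auto simp: abgens_def tgens_def gens_lsum)
next
  fix g assume "g \<in> tgens n"
  then show "gens (psiB n g) \<subseteq> abgens n" by (rule gens_psiB)
qed (auto intro: lcong_Arels_imp_trels phiB_respects_Brels psiB_respects_trels phiB_psiB psiB_phiB)

theorem mainTheorem4:
  fixes n :: nat
  shows "pres_iso (tgens n) (trels n :: ((tgen, 'k::field_char_0) lterm \<times> _) set)
                  (xygens n) (Arels n) phiA
       \<and> pres_iso (abgens n) (Brels n :: ((abgen, 'k) lterm \<times> _) set)
                  (tgens n) (trels n) (phiB n)"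
  using pres_iso_A pres_iso_B by blast

end
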